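(* Let $P = \{p_1,\dots,p_s\}$ and $P' = \{p'_1,\dots,p'_s\}$ be width-$k$ puzzles of size $s$, each with a fixed enumeration of its rows. If there is a graph isomorphism $\varphi : G_P \to G_{P'}$ that maps row vertices to row vertices, column vertices to column vertices, element vertices to element vertices, and cell vertices to cell vertices, then there exist $\rho \in \mathrm{Sym}([k])$ and $\delta \in \mathrm{Sym}(\{1,2,3\})$ such that $P' = \{(\delta(r_{\rho(c)}))_{c \in [k]} : r \in P\}$. Consequently $P$ is a strong USP if and only if $P'$ is a strong USP.
   Context: A width-$k$ puzzle is a finite set $P \subseteq \{1,2,3\}^k$; for $r\in P$, $r_c$ is its $c$-th coordinate. For a puzzle $P=\{p_1,\dots,p_s\}$ with rows enumerated, $G_P$ is the undirected graph with vertex set the disjoint union of row vertices $\{\mathrm{row}_i\}_{i\in[s]}$, column vertices $\{\mathrm{col}_c\}_{c\in[k]}$, element vertices $\{e_j\}_{j\in\{1,2,3\}}$, and cell vertices $\{v_{i,c}\}_{(i,c)\in[s]\times[k]}$, where each cell vertex $v_{i,c}$ is adjacent exactly to $\mathrm{row}_i$, $\mathrm{col}_c$, and $e_{(p_i)_c}$, and there are no other edges. $P$ is a strong USP if for all $\pi_1,\pi_2,\pi_3 \in \mathrm{Sym}(P)$, either $\pi_1=\pi_2=\pi_3$, or there exist $r \in P$ and $c \in [k]$ such that exactly two of $(\pi_1(r))_c = 1$, $(\pi_2(r))_c = 2$, $(\pi_3(r))_c = 3$ hold. *)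

theory Defs
  imports "HOL-Combinatorics.Permutations"
begin

text \<open>Conventions: a row of a width-k puzzle is a list of length k with entries in {1,2,3};
  columns are indexed by {0..<k} (0-based), rows of an enumerated puzzle by {0..<s}.\<close>

definition puzzle :: "nat \<Rightarrow> nat list set \<Rightarrow> bool" where
  "puzzle k P \<longleftrightarrow> finite P \<and> (\<forall>r\<in>P. length r = k \<and> set r \<subseteq> {1,2,3})"

definition strong_USP :: "nat \<Rightarrow> nat list set \<Rightarrow> bool" where
  "strong_USP k P \<longleftrightarrow>
     (\<forall>\<pi>1 \<pi>2 \<pi>3. \<pi>1 permutes P \<longrightarrow> \<pi>2 permutes P \<longrightarrow> \<pi>3 permutes P \<longrightarrow>
        (\<pi>1 = \<pi>2 \<and> \<pi>2 = \<pi>3) \<or>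
        (\<exists>r\<in>P. \<exists>c<k.
            let A = ((\<pi>1 r) ! c = 1); B = ((\<pi>2 r) ! c = 2); C = ((\<pi>3 r) ! c = 3)
            in (A \<and> B \<and> \<not> C) \<or> (A \<and> \<not> B \<and> C) \<or> (\<not> A \<and> B \<and> C)))"

datatype vtx = Row nat | Col nat | Elem nat | Cell nat nat

fun vkind :: "vtx \<Rightarrow> nat" where
  "vkind (Row _) = 0" | "vkind (Col _) = 1" | "vkind (Elem _) = 2" | "vkind (Cell _ _) = 3"

definition gverts :: "nat \<Rightarrow> nat \<Rightarrow> vtx set" where
  "gverts s k = Row ` {..<s} \<union> Col ` {..<k} \<union> Elem ` {1,2,3} \<union>
     {Cell i c | i c. i < s \<and> c < k}"

definition gadj :: "(nat \<Rightarrow> nat list) \<Rightarrow> nat \<Rightarrow> nat \<Rightarrow> vtx \<Rightarrow> vtx \<Rightarrow> bool" where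
  "gadj p s k u v \<longleftrightarrow> (\<exists>i c. i < s \<and> c < k \<and>
     ((u = Cell i c \<and> (v = Row i \<or> v = Col c \<or> v = Elem (p i ! c))) \<or>
      (v = Cell i c \<and> (u = Row i \<or> u = Col c \<or> u = Elem (p i ! c)))))"

definition type_preserving_iso ::
  "(vtx \<Rightarrow> vtx) \<Rightarrow> (nat \<Rightarrow> nat list) \<Rightarrow> (nat \<Rightarrow> nat list) \<Rightarrow> nat \<Rightarrow> nat \<Rightarrow> bool" where
  "type_preserving_iso \<phi> p p' s k \<longleftrightarrow>
     bij_betw \<phi> (gverts s k) (gverts s k) \<and>
     (\<forall>u\<in>gverts s k. \<forall>v\<in>gverts s k. gadj p s k u v \<longleftrightarrow> gadj p' s k (\<phi> u) (\<phi> v)) \<and>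
     (\<forall>u\<in>gverts s k. vkind (\<phi> u) = vkind u)"

end

theory Submission
  imports Defs
begin

text \<open>A type-preserving isomorphism of the puzzle graphs permutes the row, column and
  element vertices among themselves, say by \<sigma>, \<tau> and \<delta>. A cell vertex is the only common
  neighbour of its row and its column, so cell (i, c) goes to cell (\<sigma> i, \<tau> c), and comparing
  element neighbours gives p' (\<sigma> i) ! \<tau> c = \<delta> (p i ! c). Hence P' arises from P by permuting
  columns and renaming symbols. Such a map transports triples of row permutations by
  conjugation, and renaming symbols by \<delta> only permutes which of the three conditions
  \<pi> j r ! c = j hold, so the number of them that hold is unchanged; thus being a strong
  USP is invariant.\<close>

lemma map_permutation_surj:
  assumes "bij_betw f A B" "q permutes B"
  shows "\<exists>p. p permutes A \<and> q = map_permutation A f p"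
proof (intro exI conjI)
  show "map_permutation B (inv_into A f) q permutes A"
    by (rule map_permutation_permutes[OF bij_betw_inv_into[OF assms(1)] assms(2)])
  show "q = map_permutation A f (map_permutation B (inv_into A f) q)"
    using map_permutation_compose_inv[OF bij_betw_inv_into[OF assms(1)] assms(2)]
      bij_betw_inv_into_right[OF assms(1)] by simp
qed

lemma card_fixed_points_conjugate:
  assumes "\<delta> permutes S"
  shows "card {j \<in> S. \<delta> (Y (inv \<delta> j)) = j} = card {j \<in> S. Y j = j}"
proof -
  have "\<delta> ` {j \<in> S. Y j = j} = {j \<in> S. \<delta> (Y (inv \<delta> j)) = j}"
  proof (intro equalityI subsetI)
    fix j assume j: "j \<in> {j \<in> S. \<delta> (Y (inv \<delta> j)) = j}"
    show "j \<in> \<delta> ` {j \<in> S. Y j = j}"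
    proof (rule image_eqI)
      show "j = \<delta> (inv \<delta> j)" by (simp add: permutes_inverses[OF assms])
      show "inv \<delta> j \<in> {j \<in> S. Y j = j}"
        using j permutes_inverses(2)[OF assms, of "Y (inv \<delta> j)"]
          permutes_in_image[OF permutes_inv[OF assms]] by simp
    qed
  qed (use assms in \<open>auto simp: permutes_inverses permutes_in_image\<close>)
  moreover have "inj_on \<delta> {j \<in> S. Y j = j}"
    using permutes_inj_on[OF assms] by blast
  ultimately show ?thesis using card_image by fastforce
qed

lemma bij_betw_level_set:
  assumes "bij_betw f V V" "\<And>u. u \<in> V \<Longrightarrow> g (f u) = g u"
  shows "bij_betw f {u \<in> V. g u = n} {u \<in> V. g u = n}"
proof -
  have "f ` {u \<in> V. g u = n} = {u \<in> V. g u = n}"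
  proof (intro equalityI subsetI)
    fix v assume "v \<in> f ` {u \<in> V. g u = n}"
    then show "v \<in> {u \<in> V. g u = n}" using assms bij_betwE by fastforce
  next
    fix v assume v: "v \<in> {u \<in> V. g u = n}"
    then obtain u where "u \<in> V" "v = f u"
      using bij_betw_imp_surj_on[OF assms(1)] by blast
    then show "v \<in> f ` {u \<in> V. g u = n}" using v assms(2) by auto
  qed
  then show ?thesis
    using bij_betw_imp_inj_on[OF assms(1)] by (simp add: bij_betw_def inj_on_subset)
qed

definition induced_perm :: "('a \<Rightarrow> 'b) \<Rightarrow> 'a set \<Rightarrow> ('b \<Rightarrow> 'b) \<Rightarrow> 'a \<Rightarrow> 'a" where
  "induced_perm C I f i = (if i \<in> I then inv C (f (C i)) else i)"

lemma induced_perm_apply: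
  assumes "inj C" "bij_betw f (C ` I) (C ` I)" "i \<in> I"
  shows "f (C i) = C (induced_perm C I f i)"
proof -
  have "f (C i) \<in> range C" using bij_betwE[OF assms(2)] assms(3) by blast
  then show ?thesis by (simp add: induced_perm_def assms(3) f_inv_into_f)
qed

lemma induced_perm_permutes:
  assumes "inj C" "bij_betw f (C ` I) (C ` I)"
  shows "induced_perm C I f permutes I"
proof (rule bij_imp_permutes)
  have "bij_betw (inv C \<circ> f \<circ> C) I I"
  proof (rule bij_betw_trans[OF _ bij_betw_trans[OF assms(2)]])
    show "bij_betw C I (C ` I)" using assms(1) by (simp add: bij_betw_imageI inj_on_subset)
    show "bij_betw (inv C) (C ` I) I"
      using bij_betw_inv_into_subset[OF inj_on_imp_bij_betw[OF assms(1)] subset_UNIV refl] .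
  qed
  then show "bij_betw (induced_perm C I f) I I"
    by (rule bij_betw_cong[THEN iffD1, rotated]) (simp add: induced_perm_def)
qed (simp add: induced_perm_def)

definition puzzle_map :: "nat \<Rightarrow> (nat \<Rightarrow> nat) \<Rightarrow> (nat \<Rightarrow> nat) \<Rightarrow> nat list \<Rightarrow> nat list" where
  "puzzle_map k \<rho> \<delta> r = map (\<lambda>c. \<delta> (r ! \<rho> c)) [0..<k]"

lemma length_puzzle_map [simp]: "length (puzzle_map k \<rho> \<delta> r) = k"
  by (simp add: puzzle_map_def)

lemma nth_puzzle_map [simp]: "c < k \<Longrightarrow> puzzle_map k \<rho> \<delta> r ! c = \<delta> (r ! \<rho> c)"
  by (simp add: puzzle_map_def)

lemma puzzle_map_inv_cancel:
  assumes "length r = k" "\<rho> permutes {..<k}" "\<delta> permutes S"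
  shows "puzzle_map k (inv \<rho>) (inv \<delta>) (puzzle_map k \<rho> \<delta> r) = r"
proof (rule nth_equalityI)
  fix c assume "c < length (puzzle_map k (inv \<rho>) (inv \<delta>) (puzzle_map k \<rho> \<delta> r))"
  then have "c < k" "inv \<rho> c < k"
    using permutes_in_image[OF permutes_inv[OF assms(2)]] by auto
  then show "puzzle_map k (inv \<rho>) (inv \<delta>) (puzzle_map k \<rho> \<delta> r) ! c = r ! c"
    by (simp add: permutes_inverses[OF assms(2)] permutes_inverses[OF assms(3)])
qed (simp add: assms(1))

lemma card_fixed_points_puzzle_map:
  assumes \<rho>: "\<rho> permutes {..<k}" and \<delta>: "\<delta> permutes {1,2,3::nat}" and "c < k"
  shows "card {m \<in> {1,2,3}. puzzle_map k \<rho> \<delta> (R (inv \<delta> m)) ! inv \<rho> c = m} =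
         card {j \<in> {1,2,3}. R j ! c = j}"
proof -
  have "inv \<rho> c < k"
    using assms(3) permutes_in_image[OF permutes_inv[OF \<rho>]] by simp
  then have "puzzle_map k \<rho> \<delta> (R (inv \<delta> m)) ! inv \<rho> c = \<delta> (R (inv \<delta> m) ! c)" for m
    by (simp add: permutes_inverses(1)[OF \<rho>])
  then show ?thesis
    using card_fixed_points_conjugate[OF \<delta>, of "\<lambda>j. R j ! c"] by simp
qed

lemma card_exactly_two_of_three:
  "card {j \<in> {1,2,3::nat}. Q j} = 2 \<longleftrightarrow>
     (Q 1 \<and> Q 2 \<and> \<not> Q 3) \<or> (Q 1 \<and> \<not> Q 2 \<and> Q 3) \<or> (\<not> Q 1 \<and> Q 2 \<and> Q 3)"
proof -
  have "{j \<in> {1,2,3::nat}. Q j} =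
      (if Q 1 then {1} else {}) \<union> (if Q 2 then {2} else {}) \<union> (if Q 3 then {3} else {})"
    by auto
  then show ?thesis
    by (cases "Q 1"; cases "Q 2"; cases "Q 3") (simp_all only: if_True if_False, simp_all)
qed

lemma strong_USP_iff_card:
  "strong_USP k P \<longleftrightarrow>
     (\<forall>\<pi>. (\<forall>j\<in>{1,2,3}. \<pi> j permutes P) \<longrightarrow>
        (\<forall>i\<in>{1,2,3}. \<forall>j\<in>{1,2,3}. \<pi> i = \<pi> j) \<or>
        (\<exists>r\<in>P. \<exists>c<k. card {j \<in> {1,2,3::nat}. \<pi> j r ! c = j} = 2))"
  (is "_ \<longleftrightarrow> (\<forall>\<pi>. ?perms \<pi> \<longrightarrow> ?concl \<pi>)")
proof
  assume usp: "strong_USP k P"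
  show "\<forall>\<pi>. ?perms \<pi> \<longrightarrow> ?concl \<pi>"
  proof (intro allI impI)
    fix \<pi> :: "nat \<Rightarrow> nat list \<Rightarrow> nat list" assume "\<forall>j\<in>{1,2,3}. \<pi> j permutes P"
    then consider "\<pi> 1 = \<pi> 2" "\<pi> 2 = \<pi> 3" | r c where "r \<in> P" "c < k"
        "let A = ((\<pi> 1 r) ! c = 1); B = ((\<pi> 2 r) ! c = 2); C = ((\<pi> 3 r) ! c = 3)
         in (A \<and> B \<and> \<not> C) \<or> (A \<and> \<not> B \<and> C) \<or> (\<not> A \<and> B \<and> C)"
      using usp unfolding strong_USP_def by (metis insertCI)
    then show "?concl \<pi>"
    proof cases
      case 1
      then show ?thesis by (intro disjI1) simp
    next
      case 2
      then show ?thesis unfolding card_exactly_two_of_three Let_def by blast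
    qed
  qed
next
  assume H: "\<forall>\<pi>. ?perms \<pi> \<longrightarrow> ?concl \<pi>"
  show "strong_USP k P"
    unfolding strong_USP_def
  proof (intro allI impI)
    fix \<pi>1 \<pi>2 \<pi>3 :: "nat list \<Rightarrow> nat list"
    define \<pi> where "\<pi> j = (if j = 1 then \<pi>1 else if j = 2 then \<pi>2 else \<pi>3)" for j :: nat
    assume "\<pi>1 permutes P" "\<pi>2 permutes P" "\<pi>3 permutes P"
    then have "\<forall>j\<in>{1,2,3}. \<pi> j permutes P" by (simp add: \<pi>_def)
    then consider "\<forall>i\<in>{1,2,3}. \<forall>j\<in>{1,2,3}. \<pi> i = \<pi> j"
      | r c where "r \<in> P" "c < k" "card {j \<in> {1,2,3::nat}. \<pi> j r ! c = j} = 2"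
      using H by blast
    then show "(\<pi>1 = \<pi>2 \<and> \<pi>2 = \<pi>3) \<or> (\<exists>r\<in>P. \<exists>c<k.
            let A = ((\<pi>1 r) ! c = 1); B = ((\<pi>2 r) ! c = 2); C = ((\<pi>3 r) ! c = 3)
            in (A \<and> B \<and> \<not> C) \<or> (A \<and> \<not> B \<and> C) \<or> (\<not> A \<and> B \<and> C))"
    proof cases
      case 1
      then have "\<pi> 1 = \<pi> 2" "\<pi> 2 = \<pi> 3" by blast+
      then show ?thesis by (intro disjI1) (simp add: \<pi>_def)
    next
      case 2
      then show ?thesis unfolding card_exactly_two_of_three Let_def by (auto simp: \<pi>_def)
    qed
  qed
qed

lemma strong_USP_puzzle_map:
  assumes len: "\<forall>r\<in>P. length r = k" and \<rho>: "\<rho> permutes {..<k}"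
    and \<delta>: "\<delta> permutes {1,2,3::nat}" and usp: "strong_USP k P"
  shows "strong_USP k (puzzle_map k \<rho> \<delta> ` P)"
proof -
  define f where "f = puzzle_map k \<rho> \<delta>"
  have inj: "inj_on f P"
    using puzzle_map_inv_cancel[OF _ \<rho> \<delta>] len unfolding f_def by (metis inj_on_inverseI)
  then have f: "bij_betw f P (f ` P)" by (rule inj_on_imp_bij_betw)
  show ?thesis
    unfolding strong_USP_iff_card f_def[symmetric]
  proof (intro allI impI)
    fix \<pi>' :: "nat \<Rightarrow> nat list \<Rightarrow> nat list" assume \<pi>': "\<forall>m\<in>{1,2,3}. \<pi>' m permutes f ` P"
    \<comment> \<open>the index is relabelled as well, so that \<pi>' m corresponds to \<pi> (inv \<delta> m)\<close>
    have "\<forall>j\<in>{1,2,3}. \<exists>p. p permutes P \<and> \<pi>' (\<delta> j) = map_permutation P f p"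
      using map_permutation_surj[OF f] \<pi>' permutes_in_image[OF \<delta>] by blast
    then obtain \<pi> where \<pi>: "\<forall>j\<in>{1,2,3}. \<pi> j permutes P"
      and \<pi>'_\<delta>: "\<forall>j\<in>{1,2,3}. \<pi>' (\<delta> j) = map_permutation P f (\<pi> j)"
      by metis
    have \<pi>'_eq: "\<pi>' m = map_permutation P f (\<pi> (inv \<delta> m))" if "m \<in> {1,2,3}" for m
      using \<pi>'_\<delta> that permutes_in_image[OF permutes_inv[OF \<delta>]] permutes_inverses(1)[OF \<delta>]
      by metis
    have "(\<forall>i\<in>{1,2,3}. \<forall>j\<in>{1,2,3}. \<pi> i = \<pi> j) \<or>
        (\<exists>r\<in>P. \<exists>c<k. card {j \<in> {1,2,3::nat}. \<pi> j r ! c = j} = 2)"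
      by (rule usp[unfolded strong_USP_iff_card, rule_format, OF \<pi>[rule_format]])
    then show "(\<forall>i\<in>{1,2,3}. \<forall>j\<in>{1,2,3}. \<pi>' i = \<pi>' j) \<or>
        (\<exists>r\<in>f ` P. \<exists>c<k. card {j \<in> {1,2,3::nat}. \<pi>' j r ! c = j} = 2)"
    proof
      assume equal: "\<forall>i\<in>{1,2,3}. \<forall>j\<in>{1,2,3}. \<pi> i = \<pi> j"
      have "\<pi>' i = \<pi>' j" if "i \<in> {1,2,3}" "j \<in> {1,2,3}" for i j
      proof -
        have "inv \<delta> i \<in> {1,2,3}" "inv \<delta> j \<in> {1,2,3}"
          using that by (simp_all only: permutes_in_image[OF permutes_inv[OF \<delta>]])
        then have "\<pi> (inv \<delta> i) = \<pi> (inv \<delta> j)" using equal by blast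
        then show ?thesis by (simp only: \<pi>'_eq[OF that(1)] \<pi>'_eq[OF that(2)])
      qed
      then show ?thesis by blast
    next
      assume "\<exists>r\<in>P. \<exists>c<k. card {j \<in> {1,2,3::nat}. \<pi> j r ! c = j} = 2"
      then obtain r c where r: "r \<in> P" and c: "c < k"
        and two: "card {j \<in> {1,2,3::nat}. \<pi> j r ! c = j} = 2"
        by blast
      have entry: "\<pi>' m (f r) = f (\<pi> (inv \<delta> m) r)" if "m \<in> {1,2,3}" for m
        using \<pi>'_eq[OF that] map_permutation_apply[OF inj r] by simp
      have "card {m \<in> {1,2,3::nat}. \<pi>' m (f r) ! inv \<rho> c = m} =
          card {m \<in> {1,2,3}. f (\<pi> (inv \<delta> m) r) ! inv \<rho> c = m}"
        by (intro arg_cong[where f = card] Collect_cong conj_cong refl) (simp only: entry)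
      also have "\<dots> = 2"
        using card_fixed_points_puzzle_map[OF \<rho> \<delta> c, of "\<lambda>j. \<pi> j r"] two
        unfolding f_def by simp
      finally have "card {m \<in> {1,2,3::nat}. \<pi>' m (f r) ! inv \<rho> c = m} = 2" .
      moreover have "inv \<rho> c < k"
        using c permutes_in_image[OF permutes_inv[OF \<rho>]] by simp
      ultimately show ?thesis
        using r by blast
    qed
  qed
qed

lemma gadj_Row_iff: "gadj q s k u (Row i) \<longleftrightarrow> i < s \<and> (\<exists>c<k. u = Cell i c)"
  by (auto simp: gadj_def)

lemma gadj_Col_iff: "gadj q s k u (Col c) \<longleftrightarrow> c < k \<and> (\<exists>i<s. u = Cell i c)"
  by (auto simp: gadj_def)

lemma gadj_Elem_iff: "gadj q s k u (Elem e) \<longleftrightarrow> (\<exists>i<s. \<exists>c<k. u = Cell i c \<and> e = q i ! c)"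
  by (auto simp: gadj_def)

lemma gverts_Row_Col_Elem:
  "Row ` {..<s} = {u \<in> gverts s k. vkind u = 0}"
  "Col ` {..<k} = {u \<in> gverts s k. vkind u = 1}"
  "Elem ` {1,2,3} = {u \<in> gverts s k. vkind u = 2}"
  by (auto simp: gverts_def elim: vkind.elims)

lemma type_preserving_iso_induced_perms:
  assumes "type_preserving_iso \<phi> p p' s k"
  obtains \<sigma> \<tau> \<delta> where "\<sigma> permutes {..<s}" "\<tau> permutes {..<k}" "\<delta> permutes {1,2,3}"
    and "\<And>i. i < s \<Longrightarrow> \<phi> (Row i) = Row (\<sigma> i)"
    and "\<And>c. c < k \<Longrightarrow> \<phi> (Col c) = Col (\<tau> c)"
    and "\<And>e. e \<in> {1,2,3} \<Longrightarrow> \<phi> (Elem e) = Elem (\<delta> e)"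
proof -
  have bij: "bij_betw \<phi> (gverts s k) (gverts s k)"
    and kind: "\<And>u. u \<in> gverts s k \<Longrightarrow> vkind (\<phi> u) = vkind u"
    using assms unfolding type_preserving_iso_def by blast+
  have classes: "bij_betw \<phi> (Row ` {..<s}) (Row ` {..<s})"
    "bij_betw \<phi> (Col ` {..<k}) (Col ` {..<k})" "bij_betw \<phi> (Elem ` {1,2,3}) (Elem ` {1,2,3})"
    using bij_betw_level_set[where g = vkind, OF bij kind]
    unfolding gverts_Row_Col_Elem[where s = s and k = k] by blast+
  have inj: "inj Row" "inj Col" "inj Elem"
    by (auto intro: injI)
  show ?thesis
  proof (rule that)
    show "induced_perm Row {..<s} \<phi> permutes {..<s}" "induced_perm Col {..<k} \<phi> permutes {..<k}"
      "induced_perm Elem {1,2,3} \<phi> permutes {1,2,3}"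
      using inj classes by (auto intro: induced_perm_permutes)
    show "\<phi> (Row i) = Row (induced_perm Row {..<s} \<phi> i)" if "i < s" for i
      using that by (intro induced_perm_apply inj classes) simp
    show "\<phi> (Col c) = Col (induced_perm Col {..<k} \<phi> c)" if "c < k" for c
      using that by (intro induced_perm_apply inj classes) simp
    show "\<phi> (Elem e) = Elem (induced_perm Elem {1,2,3} \<phi> e)" if "e \<in> {1,2,3}" for e
      using that by (intro induced_perm_apply inj classes)
  qed
qed

lemma type_preserving_iso_entry:
  assumes iso: "type_preserving_iso \<phi> p p' s k" and "i < s" "c < k" "p i ! c \<in> {1,2,3}"
    and "\<phi> (Row i) = Row i'" "\<phi> (Col c) = Col c'" "\<phi> (Elem (p i ! c)) = Elem e"
  shows "p' i' ! c' = e"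
proof -
  have cell: "Cell i c \<in> gverts s k"
    using assms(2,3) by (simp add: gverts_def)
  have adj: "gadj p s k (Cell i c) v \<longleftrightarrow> gadj p' s k (\<phi> (Cell i c)) (\<phi> v)" if "v \<in> gverts s k" for v
    using iso cell that by (simp add: type_preserving_iso_def)
  have "gadj p' s k (\<phi> (Cell i c)) (Row i')" "gadj p' s k (\<phi> (Cell i c)) (Col c')"
    "gadj p' s k (\<phi> (Cell i c)) (Elem e)"
    using adj[of "Row i"] adj[of "Col c"] adj[of "Elem (p i ! c)"] assms(2-7)
    by (auto simp: gverts_def gadj_Row_iff gadj_Col_iff gadj_Elem_iff)
  then show ?thesis
    by (auto simp: gadj_Row_iff gadj_Col_iff gadj_Elem_iff)
qed

lemma type_preserving_iso_imp_puzzle_map: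
  assumes "puzzle k P" "puzzle k P'" "bij_betw p {..<s} P" "bij_betw p' {..<s} P'"
    and iso: "type_preserving_iso \<phi> p p' s k"
  shows "\<exists>\<rho> \<delta>. \<rho> permutes {..<k} \<and> \<delta> permutes {1,2,3::nat} \<and> P' = puzzle_map k \<rho> \<delta> ` P"
proof -
  obtain \<sigma> \<tau> \<delta> where \<sigma>: "\<sigma> permutes {..<s}" and \<tau>: "\<tau> permutes {..<k}"
    and \<delta>: "\<delta> permutes {1,2,3}" and Row: "\<And>i. i < s \<Longrightarrow> \<phi> (Row i) = Row (\<sigma> i)"
    and Col: "\<And>c. c < k \<Longrightarrow> \<phi> (Col c) = Col (\<tau> c)"
    and Elem: "\<And>e. e \<in> {1,2,3} \<Longrightarrow> \<phi> (Elem e) = Elem (\<delta> e)"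
    using type_preserving_iso_induced_perms[OF iso] by blast
  have P: "P = p ` {..<s}" "P' = p' ` {..<s}"
    using assms(3,4) by (simp_all add: bij_betw_imp_surj_on)
  have entry: "p i ! c \<in> {1,2,3}" if "i < s" "c < k" for i c
    using assms(1) that nth_mem[of c "p i"] unfolding P puzzle_def by fastforce
  have row: "p' (\<sigma> i) = puzzle_map k (inv \<tau>) \<delta> (p i)" if i: "i < s" for i
  proof (rule nth_equalityI)
    have "\<sigma> i < s" using permutes_in_image[OF \<sigma>] i by simp
    then show len: "length (p' (\<sigma> i)) = length (puzzle_map k (inv \<tau>) \<delta> (p i))"
      using assms(2) unfolding P puzzle_def by auto
    fix c assume "c < length (p' (\<sigma> i))"
    then have c: "c < k" "inv \<tau> c < k"
      using len permutes_in_image[OF permutes_inv[OF \<tau>]] by auto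
    have "p' (\<sigma> i) ! c = p' (\<sigma> i) ! \<tau> (inv \<tau> c)"
      by (simp add: permutes_inverses[OF \<tau>])
    also have "\<dots> = \<delta> (p i ! inv \<tau> c)"
      using type_preserving_iso_entry[OF iso i c(2) entry[OF i c(2)]] Row Col Elem entry i c
      by blast
    also have "\<dots> = puzzle_map k (inv \<tau>) \<delta> (p i) ! c"
      using c by simp
    finally show "p' (\<sigma> i) ! c = puzzle_map k (inv \<tau>) \<delta> (p i) ! c" .
  qed
  have "P' = p' ` \<sigma> ` {..<s}"
    unfolding P permutes_image[OF \<sigma>] ..
  also have "\<dots> = puzzle_map k (inv \<tau>) \<delta> ` P"
    unfolding P image_image using row by simp
  finally show ?thesis
    using permutes_inv[OF \<tau>] \<delta> by blast
qed

lemma strong_USP_puzzle_map_iff: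
  assumes len: "\<forall>r\<in>P. length r = k" and \<rho>: "\<rho> permutes {..<k}" and \<delta>: "\<delta> permutes {1,2,3::nat}"
  shows "strong_USP k (puzzle_map k \<rho> \<delta> ` P) \<longleftrightarrow> strong_USP k P"
proof
  assume "strong_USP k (puzzle_map k \<rho> \<delta> ` P)"
  then have "strong_USP k (puzzle_map k (inv \<rho>) (inv \<delta>) ` puzzle_map k \<rho> \<delta> ` P)"
    using strong_USP_puzzle_map[OF _ permutes_inv[OF \<rho>] permutes_inv[OF \<delta>]] by simp
  also have "puzzle_map k (inv \<rho>) (inv \<delta>) ` puzzle_map k \<rho> \<delta> ` P = P"
    using len by (simp add: image_image puzzle_map_inv_cancel[OF _ \<rho> \<delta>])
  finally show "strong_USP k P" .
qed (rule strong_USP_puzzle_map[OF len \<rho> \<delta>])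

theorem mainTheorem8:
  fixes k s :: nat and P P' :: "nat list set" and p p' :: "nat \<Rightarrow> nat list"
    and \<phi> :: "vtx \<Rightarrow> vtx"
  assumes "puzzle k P" and "puzzle k P'"
    and "bij_betw p {..<s} P" and "bij_betw p' {..<s} P'"
    and "type_preserving_iso \<phi> p p' s k"
  shows "(\<exists>\<rho> \<delta>. \<rho> permutes {..<k} \<and> \<delta> permutes {1,2,3::nat} \<and>
            P' = (\<lambda>r. map (\<lambda>c. \<delta> (r ! \<rho> c)) [0..<k]) ` P)
         \<and> (strong_USP k P \<longleftrightarrow> strong_USP k P')"
proof -
  obtain \<rho> \<delta> where \<rho>: "\<rho> permutes {..<k}" and \<delta>: "\<delta> permutes {1,2,3::nat}"
    and P': "P' = puzzle_map k \<rho> \<delta> ` P"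
    using type_preserving_iso_imp_puzzle_map[OF assms] by blast
  have "\<forall>r\<in>P. length r = k"
    using assms(1) by (simp add: puzzle_def)
  then have "strong_USP k P \<longleftrightarrow> strong_USP k P'"
    unfolding P' using strong_USP_puzzle_map_iff[OF _ \<rho> \<delta>] by simp
  moreover have "puzzle_map k \<rho> \<delta> = (\<lambda>r. map (\<lambda>c. \<delta> (r ! \<rho> c)) [0..<k])"
    by (simp add: fun_eq_iff puzzle_map_def)
  ultimately show ?thesis
    using \<rho> \<delta> P' by auto
qed

end
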